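(* Let $\mathcal{L} = \prod_{i=1}^{r} C(n_i)$ be a product of chain lattices (a square lattice), let $\beta = (\rho, \ldots, \rho, b, \rho, \ldots, \rho)$ where $b$ is the maximal element of the factor $C(n_i)$ in some position $i$ and every other coordinate is the minimum $\rho$ of its chain (so $\beta$ is a maximal join-irreducible element of $\mathcal{L}$), let $B_\beta = \mathcal{L} \setminus \mathcal{L}_\beta = \{\gamma \in \mathcal{L} : \gamma \geq \beta\}$, and let $\alpha \in \mathcal{L}_\beta$. Then \[ |E_\alpha| - |E_\alpha(\mathcal{L}_\beta)| \geq |B_\beta| - 1. \]
   Context: $C(n)$ is the chain (totally ordered) lattice with $n$ elements; the product carries the componentwise order. $\mathcal{L}_\beta = \{\gamma \in \mathcal{L} : \gamma \not\geq \beta\}$ (the pruning of $\mathcal{L}$ at $\beta$, i.e. the lattice of hereditary subsets of the join-irreducible poset with $\beta$ removed). A diamond in a lattice $\mathcal{M}$ is a set $\{x, y, x\vee y, x\wedge y\}$ with $x, y \in \mathcal{M}$ non-comparable. For $\alpha \in \mathcal{M}$, $E_\alpha(\mathcal{M}) = \{(\alpha,\gamma) : \text{some diamond of } \mathcal{M} \text{ contains both } \alpha \text{ and } \gamma\}$, and $E_\alpha = E_\alpha(\mathcal{L})$. *)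

theory Defs
  imports Main
begin

text \<open>The product lattice C(n_0) x ... x C(n_{r-1}) of chains, where C(m) = {0,...,m-1}.
  Elements are functions nat => nat, vanishing outside {0..<r}; the order, join and meet
  are the pointwise ones inherited from the function lattice.\<close>
definition chain_prod :: "(nat \<Rightarrow> nat) \<Rightarrow> nat \<Rightarrow> (nat \<Rightarrow> nat) set" where
  "chain_prod n r = {x. (\<forall>i<r. x i < n i) \<and> (\<forall>i. r \<le> i \<longrightarrow> x i = 0)}"

definition pruning :: "('a::order) set \<Rightarrow> 'a \<Rightarrow> 'a set" where
  "pruning L b = {g \<in> L. \<not> b \<le> g}"

definition diamonds :: "('a::lattice) set \<Rightarrow> 'a set set" where
  "diamonds M = {{x, y, sup x y, inf x y} | x y. x \<in> M \<and> y \<in> M \<and> \<not> x \<le> y \<and> \<not> y \<le> x}"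

definition E_set :: "('a::lattice) set \<Rightarrow> 'a \<Rightarrow> ('a \<times> 'a) set" where
  "E_set M a = {(a, g) | g. \<exists>D \<in> diamonds M. a \<in> D \<and> g \<in> D}"

end

theory Submission
  imports Defs "HOL-Library.FuncSet"
begin

text \<open>Every element \<open>\<gamma> \<ge> \<beta>\<close> of \<open>\<L>\<close> contributes a pair \<open>(\<alpha>, \<gamma>)\<close> to \<open>E\<^sub>\<alpha>\<close>
  that is absent from \<open>E\<^sub>\<alpha>(\<L>\<^sub>\<beta>)\<close>, with the single possible exception of
  \<open>\<gamma>\<^sub>0 = \<alpha>(i := b)\<close>. It is absent because \<open>\<beta>\<close> is join-prime, so no diamond of the pruning contains
  an element above \<open>\<beta>\<close>. It is present because \<open>\<gamma>\<close> is either incomparable to \<open>\<alpha>\<close>, or lies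
  above \<open>\<alpha>\<close> and differs from it in coordinate \<open>i\<close> and in some other coordinate, in which
  case \<open>\<alpha>\<close> and \<open>\<gamma>\<close> are the meet and join of two incomparable elements obtained by swapping
  the \<open>i\<close>-th coordinate.\<close>

lemma diamondsI:
  "x \<in> M \<Longrightarrow> y \<in> M \<Longrightarrow> \<not> x \<le> y \<Longrightarrow> \<not> y \<le> x \<Longrightarrow> {x, y, sup x y, inf x y} \<in> diamonds M"
  unfolding diamonds_def by blast

lemma diamonds_mono: "M \<subseteq> N \<Longrightarrow> diamonds M \<subseteq> diamonds N"
  unfolding diamonds_def by fast

lemma E_set_mono: "M \<subseteq> N \<Longrightarrow> E_set M a \<subseteq> E_set N a"
  using diamonds_mono[of M N] unfolding E_set_def by fast

lemma E_setI: "D \<in> diamonds M \<Longrightarrow> a \<in> D \<Longrightarrow> g \<in> D \<Longrightarrow> (a, g) \<in> E_set M a"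
  unfolding E_set_def by auto

lemma E_set_incomparable:
  "x \<in> M \<Longrightarrow> y \<in> M \<Longrightarrow> \<not> x \<le> y \<Longrightarrow> \<not> y \<le> x \<Longrightarrow> (x, y) \<in> E_set M x"
  by (rule E_setI[OF diamondsI]) auto

lemma E_set_subset:
  assumes "\<And>x y. x \<in> M \<Longrightarrow> y \<in> M \<Longrightarrow> sup x y \<in> M \<and> inf x y \<in> M"
  shows "E_set M a \<subseteq> {a} \<times> M"
  using assms unfolding E_set_def diamonds_def by blast

lemma E_set_pruning_not_above:
  assumes join_prime: "\<And>x y. x \<in> M \<Longrightarrow> y \<in> M \<Longrightarrow> b \<le> sup x y \<Longrightarrow> b \<le> x \<or> b \<le> y"
    and "(a, g) \<in> E_set (pruning M b) a"
  shows "\<not> b \<le> g"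
proof -
  obtain x y where x: "x \<in> M" "\<not> b \<le> x" and y: "y \<in> M" "\<not> b \<le> y"
    and g: "g \<in> {x, y, sup x y, inf x y}"
    using assms(2) unfolding E_set_def diamonds_def pruning_def by blast
  have "\<not> b \<le> sup x y" using join_prime[OF x(1) y(1)] x(2) y(2) by blast
  moreover have "\<not> b \<le> inf x y" using x(2) le_infE by blast
  ultimately show ?thesis using g x(2) y(2) by blast
qed

lemma card_diff_ge_card_minus_one:
  assumes "finite T" "S \<subseteq> T" "inj_on f A" "f ` (A - {a}) \<subseteq> T - S"
  shows "int (card T) - int (card S) \<ge> int (card A) - 1"
proof -
  have "card (A - {a}) = card (f ` (A - {a}))"
    using assms(3) by (simp add: card_image inj_on_diff)
  also have "\<dots> \<le> card (T - S)" using assms(1,4) by (simp add: card_mono)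
  also have "\<dots> = card T - card S" using assms(1,2) by (simp add: card_Diff_subset finite_subset)
  finally have "card (A - {a}) \<le> card T - card S" .
  moreover have "card A - 1 \<le> card (A - {a})" using diff_card_le_card_Diff[of "{a}" A] by simp
  moreover have "card S \<le> card T" using assms(1,2) by (rule card_mono)
  ultimately show ?thesis by linarith
qed

lemma finite_chain_prod: "finite (chain_prod n r)"
proof -
  let ?ext = "\<lambda>f j. if j < r then f j else 0"
  have "chain_prod n r \<subseteq> ?ext ` PiE {..<r} (\<lambda>j. {..<n j})"
  proof
    fix x assume x: "x \<in> chain_prod n r"
    then have "restrict x {..<r} \<in> PiE {..<r} (\<lambda>j. {..<n j})"
      and "x = ?ext (restrict x {..<r})"
      by (auto simp: chain_prod_def fun_eq_iff)
    then show "x \<in> ?ext ` PiE {..<r} (\<lambda>j. {..<n j})" by blast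
  qed
  moreover have "finite (PiE {..<r} (\<lambda>j. {..<n j}))" by (rule finite_PiE) auto
  ultimately show ?thesis using finite_subset by blast
qed

lemma chain_prod_sup_inf:
  "x \<in> chain_prod n r \<Longrightarrow> y \<in> chain_prod n r \<Longrightarrow> sup x y \<in> chain_prod n r \<and> inf x y \<in> chain_prod n r"
  by (simp add: chain_prod_def sup_fun_def inf_fun_def sup_nat_def inf_nat_def min.strict_coboundedI1)

lemma finite_E_set_chain_prod: "finite (E_set (chain_prod n r) a)"
  by (intro finite_subset[OF E_set_subset[OF chain_prod_sup_inf]] finite_SigmaI) (simp_all add: finite_chain_prod)

lemma E_set_chain_prod_swap:
  assumes "a \<in> chain_prod n r" "g \<in> chain_prod n r" "a \<le> g"
    and "i \<noteq> j" "a i < g i" "a j < g j"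
  shows "(a, g) \<in> E_set (chain_prod n r) a"
proof -
  define x where "x = a(i := g i)"
  define y where "y = g(i := a i)"
  have "x \<in> chain_prod n r" "y \<in> chain_prod n r"
    using assms(1,2) by (auto simp: x_def y_def chain_prod_def)
  moreover have "\<not> x \<le> y" "\<not> y \<le> x"
    using assms(4-6) by (auto simp: x_def y_def le_fun_def dest!: spec[of _ i] spec[of _ j])
  ultimately have "{x, y, sup x y, inf x y} \<in> diamonds (chain_prod n r)"
    by (rule diamondsI)
  moreover have "sup x y = g" "inf x y = a"
    using assms(3) by (auto simp: x_def y_def le_fun_def fun_eq_iff sup_nat_def inf_nat_def)
  ultimately show ?thesis by (auto intro: E_setI)
qed

lemma E_set_chain_prod_top_coordinate:
  assumes a: "a \<in> chain_prod n r" and g: "g \<in> chain_prod n r"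
    and "a i < g i" "n i - 1 \<le> g i" "g \<noteq> a(i := n i - 1)"
  shows "(a, g) \<in> E_set (chain_prod n r) a"
proof (cases "a \<le> g")
  case False
  have "\<not> g \<le> a" using \<open>a i < g i\<close> le_funD not_le by metis
  with False show ?thesis using a g by (intro E_set_incomparable)
next
  case True
  have "g i = n i - 1"
    using assms(3,4) a g by (cases "i < r") (auto simp: chain_prod_def)
  moreover obtain j where "g j \<noteq> (a(i := n i - 1)) j"
    using \<open>g \<noteq> a(i := n i - 1)\<close> by (meson ext)
  ultimately have "j \<noteq> i" "g j \<noteq> a j" by (auto split: if_splits)
  moreover have "a j \<le> g j" using True by (simp add: le_fun_def)
  ultimately show ?thesis
    using E_set_chain_prod_swap[OF a g True, of i j] \<open>a i < g i\<close> by simp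
qed

lemma le_fun_single_iff: "(\<lambda>j. if j = i then c else 0) \<le> x \<longleftrightarrow> c \<le> (x i :: nat)"
  by (auto simp: le_fun_def)

lemma single_join_prime:
  fixes c :: nat
  shows "(\<lambda>j. if j = i then c else 0) \<le> sup x y \<Longrightarrow>
    (\<lambda>j. if j = i then c else 0) \<le> x \<or> (\<lambda>j. if j = i then c else 0) \<le> y"
  by (auto simp: le_fun_single_iff sup_nat_def max_def split: if_splits)

theorem mainTheorem10:
  fixes n :: "nat \<Rightarrow> nat" and r i :: nat and \<alpha> \<beta> :: "nat \<Rightarrow> nat"
  assumes "\<forall>j<r. 1 \<le> n j"
    and "i < r"
    and "\<beta> = (\<lambda>j. if j = i then n i - 1 else 0)"
    and "\<alpha> \<in> pruning (chain_prod n r) \<beta>"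
  shows "int (card (E_set (chain_prod n r) \<alpha>)) - int (card (E_set (pruning (chain_prod n r) \<beta>) \<alpha>))
           \<ge> int (card {g \<in> chain_prod n r. \<beta> \<le> g}) - 1"
proof (rule card_diff_ge_card_minus_one)
  let ?L = "chain_prod n r"
  have above_iff: "\<beta> \<le> x \<longleftrightarrow> n i - 1 \<le> x i" for x
    unfolding assms(3) by (rule le_fun_single_iff)
  have \<alpha>: "\<alpha> \<in> ?L" "\<alpha> i < n i - 1"
    using assms(4) by (auto simp: pruning_def above_iff)
  show "E_set (pruning ?L \<beta>) \<alpha> \<subseteq> E_set ?L \<alpha>"
    by (rule E_set_mono) (auto simp: pruning_def)
  show "Pair \<alpha> ` ({g \<in> ?L. \<beta> \<le> g} - {\<alpha>(i := n i - 1)}) \<subseteq> E_set ?L \<alpha> - E_set (pruning ?L \<beta>) \<alpha>"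
  proof (rule image_subsetI)
    fix g assume "g \<in> {g \<in> ?L. \<beta> \<le> g} - {\<alpha>(i := n i - 1)}"
    then have g: "g \<in> ?L" "\<beta> \<le> g" "g \<noteq> \<alpha>(i := n i - 1)" by auto
    then have "(\<alpha>, g) \<in> E_set ?L \<alpha>"
      using \<alpha> by (intro E_set_chain_prod_top_coordinate) (auto simp: above_iff)
    moreover have "(\<alpha>, g) \<notin> E_set (pruning ?L \<beta>) \<alpha>"
      using E_set_pruning_not_above single_join_prime[of i "n i - 1", folded assms(3)] g(2) by blast
    ultimately show "(\<alpha>, g) \<in> E_set ?L \<alpha> - E_set (pruning ?L \<beta>) \<alpha>" by blast
  qed
qed (auto simp: finite_E_set_chain_prod inj_on_def)

end
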